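(* Let $\mathbf{k}$ be any field, $p\ge 3$ an integer, and $S=\mathbf{k}[e_1,\ldots,e_{2p}]$. Let $f_0=t^2+e_pt+e_{2p}$ and $f_i=e_it+e_{p+i}$ for $1\le i\le p-1$, in $S[t]$. Then the elimination ideal $I=\langle f_0,\ldots,f_{p-1}\rangle\cap S$ equals the ideal $J$ of $S$ generated by the $3\times 3$ minors of the $3\times(2p-1)$ matrix $$\begin{pmatrix} 1 & e_1 & 0 & e_2 & 0 & \cdots & e_{p-1} & 0\\ e_p & e_{p+1} & e_1 & e_{p+2} & e_2 & \cdots & e_{2p-1} & e_{p-1}\\ e_{2p} & 0 & e_{p+1} & 0 & e_{p+2} & \cdots & 0 & e_{2p-1}\end{pmatrix}.$$
   Context: The ideal $\langle f_0,\dots,f_{p-1}\rangle$ is taken in $S[t]$ and intersected with $S\subset S[t]$. The matrix consists of the column $(1,e_p,e_{2p})^T$ followed, for each $i=1,\dots,p-1$, by the two columns $(e_i,e_{p+i},0)^T$ and $(0,e_i,e_{p+i})^T$. *)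

theory Defs
  imports Main "HOL-Library.Poly_Mapping"
begin

text \<open>Variable x_0 plays the role of t, and x_i the role of e_i (1 \<le> i \<le> 2p).\<close>

type_synonym 'k mpoly = "(nat \<Rightarrow>\<^sub>0 nat) \<Rightarrow>\<^sub>0 'k"

definition mvar :: "nat \<Rightarrow> 'k::comm_ring_1 mpoly" where
  "mvar i = Poly_Mapping.single (Poly_Mapping.single i 1) 1"

definition poly_ring_in :: "nat set \<Rightarrow> 'k::comm_ring_1 mpoly set" where
  "poly_ring_in V = {q::'k mpoly. \<forall>m\<in>Poly_Mapping.keys q. Poly_Mapping.keys m \<subseteq> V}"

definition ringS :: "nat \<Rightarrow> 'k::comm_ring_1 mpoly set" where
  "ringS p = poly_ring_in {1..2*p}"

definition ringSt :: "nat \<Rightarrow> 'k::comm_ring_1 mpoly set" where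
  "ringSt p = poly_ring_in {0..2*p}"

definition gen_ideal :: "'a::comm_ring_1 set \<Rightarrow> 'a set \<Rightarrow> 'a set" where
  "gen_ideal R G = {(\<Sum>g\<in>G. c g * g) | c. \<forall>g\<in>G. c g \<in> R}"

definition tvar :: "'k::comm_ring_1 mpoly" where "tvar = mvar 0"
definition evar :: "nat \<Rightarrow> 'k::comm_ring_1 mpoly" where "evar i = mvar i"

definition fgen :: "nat \<Rightarrow> nat \<Rightarrow> 'k::comm_ring_1 mpoly" where
  "fgen p i = (if i = 0 then tvar^2 + evar p * tvar + evar (2*p)
               else evar i * tvar + evar (p+i))"

definition Mat :: "nat \<Rightarrow> nat \<Rightarrow> nat \<Rightarrow> 'k::comm_ring_1 mpoly" where
  "Mat p r j =
    (if j = 0 then (if r = 0 then 1 else if r = 1 then evar p else evar (2*p))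
     else if odd j then (let i = (j+1) div 2 in
            if r = 0 then evar i else if r = 1 then evar (p+i) else 0)
     else (let i = j div 2 in
            if r = 0 then 0 else if r = 1 then evar i else evar (p+i)))"

definition det3 :: "(nat \<Rightarrow> nat \<Rightarrow> 'a::comm_ring_1) \<Rightarrow> nat \<Rightarrow> nat \<Rightarrow> nat \<Rightarrow> 'a" where
  "det3 A a b c =
     A 0 a * (A 1 b * A 2 c - A 1 c * A 2 b)
   - A 0 b * (A 1 a * A 2 c - A 1 c * A 2 a)
   + A 0 c * (A 1 a * A 2 b - A 1 b * A 2 a)"

definition minors3 :: "nat \<Rightarrow> 'k::comm_ring_1 mpoly set" where
  "minors3 p = {det3 (Mat p) a b c | a b c. a < b \<and> b < c \<and> c < 2*p - 1}"

end

(*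
  Every minor lies in the elimination ideal: adding t^2 times the first row and t times the
  second row to the third turns the columns of the matrix into f_0, t f_i and f_i, so expanding
  along that row writes the minor as an S[t]-combination of the generators.

  Conversely, let h = sum_i C_i f_i lie in S. Reducing each C_i (i >= 1) modulo the monic f_0 to
  a_i + b_i t and comparing the coefficients of 1, t, t^2 gives
    h = sum_i (a_i e_(p+i) - e_(2p) b_i e_i)   and   sum_i (a_i e_i + b_i (e_(p+i) - e_p e_i)) = 0.
  The triangular substitution e_(p+i) -> e_(p+i) + e_p e_i turns the entries
  z = (e_i, e_(p+i) - e_p e_i) of this syzygy into distinct variables, whose syzygies are Koszul,
  so the coefficient vector u = (a, b) is W z for an alternating matrix W. Writing
  h = sum_j u_j c_j with c = (e_(p+i), - e_(2p) e_i) then gives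
  h = sum_(j<k) W_jk (z_k c_j - z_j c_k), and each z_k c_j - z_j c_k is up to sign the minor on the
  first column and the two columns whose middle entries are the variables e_j, e_k. Finally,
  setting t and the variables outside S to zero moves the coefficients into S.
*)

theory Submission
  imports Defs "HOL-Computational_Algebra.Polynomial"
begin

section \<open>Ring homomorphisms and evaluation of polynomials\<close>

locale ring_hom =
  fixes H :: "'a::comm_ring_1 \<Rightarrow> 'b::comm_ring_1"
  assumes hom_1: "H 1 = 1"
    and hom_add: "H (x + y) = H x + H y"
    and hom_mult: "H (x * y) = H x * H y"
begin

lemma hom_0: "H 0 = 0"
  using hom_add[of 0 0] by simp

lemma hom_uminus: "H (- x) = - H x"
  using hom_add[of x "- x"] by (simp add: hom_0 eq_neg_iff_add_eq_0 add.commute)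

lemma hom_diff: "H (x - y) = H x - H y"
  using hom_add[of x "- y"] by (simp add: hom_uminus)

lemma hom_sum: "H (sum f A) = (\<Sum>a\<in>A. H (f a))"
  by (induction A rule: infinite_finite_induct) (simp_all add: hom_0 hom_add)

lemma hom_prod: "H (prod f A) = (\<Prod>a\<in>A. H (f a))"
  by (induction A rule: infinite_finite_induct) (simp_all add: hom_1 hom_mult)

lemma hom_power: "H (x ^ n) = H x ^ n"
  by (induction n) (simp_all add: hom_1 hom_mult)

end

definition monom_eval :: "(nat \<Rightarrow> 'a::comm_ring_1) \<Rightarrow> (nat \<Rightarrow>\<^sub>0 nat) \<Rightarrow> 'a" where
  "monom_eval \<sigma> m = (\<Prod>i\<in>Poly_Mapping.keys m. \<sigma> i ^ Poly_Mapping.lookup m i)"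

definition mpoly_eval :: "('k::comm_ring_1 \<Rightarrow> 'a::comm_ring_1) \<Rightarrow> (nat \<Rightarrow> 'a) \<Rightarrow> 'k mpoly \<Rightarrow> 'a" where
  "mpoly_eval \<kappa> \<sigma> q = (\<Sum>m\<in>Poly_Mapping.keys q. \<kappa> (Poly_Mapping.lookup q m) * monom_eval \<sigma> m)"

lemma monom_eval_superset:
  assumes "finite A" "Poly_Mapping.keys m \<subseteq> A"
  shows "monom_eval \<sigma> m = (\<Prod>i\<in>A. \<sigma> i ^ Poly_Mapping.lookup m i)"
  unfolding monom_eval_def
  by (rule prod.mono_neutral_left) (use assms in \<open>auto simp: in_keys_iff\<close>)

lemma monom_eval_0 [simp]: "monom_eval \<sigma> 0 = 1"
  by (simp add: monom_eval_def)

lemma monom_eval_add: "monom_eval \<sigma> (m + n) = monom_eval \<sigma> m * monom_eval \<sigma> n"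
proof -
  let ?A = "Poly_Mapping.keys m \<union> Poly_Mapping.keys n"
  have "monom_eval \<sigma> (m + n) = (\<Prod>i\<in>?A. \<sigma> i ^ Poly_Mapping.lookup (m + n) i)"
    using keys_add[of m n] by (intro monom_eval_superset) auto
  also have "\<dots> = (\<Prod>i\<in>?A. \<sigma> i ^ Poly_Mapping.lookup m i) * (\<Prod>i\<in>?A. \<sigma> i ^ Poly_Mapping.lookup n i)"
    by (simp add: lookup_add power_add prod.distrib)
  also have "\<dots> = monom_eval \<sigma> m * monom_eval \<sigma> n"
    by (subst (1 2) monom_eval_superset[where A = ?A]) auto
  finally show ?thesis .
qed

lemma mpoly_eval_cong:
  assumes "q \<in> poly_ring_in V" "\<And>i. i \<in> V \<Longrightarrow> \<sigma> i = \<tau> i"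
  shows "mpoly_eval \<kappa> \<sigma> q = mpoly_eval \<kappa> \<tau> q"
  using assms unfolding mpoly_eval_def monom_eval_def poly_ring_in_def
  by (intro sum.cong refl arg_cong2[where f = "(*)"] prod.cong arg_cong2[where f = "(^)"]) auto

lemma poly_mapping_update_eq_add:
  "a \<notin> Poly_Mapping.keys f \<Longrightarrow> Poly_Mapping.update a b f = f + Poly_Mapping.single a b"
  by (rule poly_mapping_eqI) (auto simp: lookup_update lookup_add lookup_single in_keys_iff when_def)

lemma poly_mapping_add_single_induct [case_names zero add_single]:
  fixes q :: "'a \<Rightarrow>\<^sub>0 'b::monoid_add"
  assumes "P 0" "\<And>f m c. P f \<Longrightarrow> P (f + Poly_Mapping.single m c)"
  shows "P q"
  by (induction q rule: update_induct) (use assms in \<open>auto simp: poly_mapping_update_eq_add\<close>)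

context ring_hom
begin

lemma mpoly_eval_superset:
  assumes "finite A" "Poly_Mapping.keys q \<subseteq> A"
  shows "mpoly_eval H \<sigma> q = (\<Sum>m\<in>A. H (Poly_Mapping.lookup q m) * monom_eval \<sigma> m)"
  unfolding mpoly_eval_def
  by (rule sum.mono_neutral_left) (use assms in \<open>auto simp: in_keys_iff hom_0\<close>)

lemma mpoly_eval_0 [simp]: "mpoly_eval H \<sigma> 0 = 0"
  by (simp add: mpoly_eval_def)

lemma mpoly_eval_add: "mpoly_eval H \<sigma> (a + b) = mpoly_eval H \<sigma> a + mpoly_eval H \<sigma> b"
proof -
  let ?A = "Poly_Mapping.keys a \<union> Poly_Mapping.keys b"
  have "mpoly_eval H \<sigma> (a + b) = (\<Sum>m\<in>?A. H (Poly_Mapping.lookup (a + b) m) * monom_eval \<sigma> m)"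
    using keys_add[of a b] by (intro mpoly_eval_superset) auto
  also have "\<dots> = (\<Sum>m\<in>?A. H (Poly_Mapping.lookup a m) * monom_eval \<sigma> m) +
      (\<Sum>m\<in>?A. H (Poly_Mapping.lookup b m) * monom_eval \<sigma> m)"
    by (simp add: lookup_add hom_add distrib_right sum.distrib)
  also have "\<dots> = mpoly_eval H \<sigma> a + mpoly_eval H \<sigma> b"
    by (subst (1 2) mpoly_eval_superset[where A = ?A]) auto
  finally show ?thesis .
qed

lemma mpoly_eval_single [simp]:
  "mpoly_eval H \<sigma> (Poly_Mapping.single m c) = H c * monom_eval \<sigma> m"
  by (cases "c = 0") (auto simp: mpoly_eval_def hom_0)

lemma mpoly_eval_mult: "mpoly_eval H \<sigma> (a * b) = mpoly_eval H \<sigma> a * mpoly_eval H \<sigma> b"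
proof (induction a rule: poly_mapping_add_single_induct)
  case zero
  then show ?case by simp
next
  case (add_single f m c)
  have "mpoly_eval H \<sigma> (Poly_Mapping.single m c * b) = H c * monom_eval \<sigma> m * mpoly_eval H \<sigma> b"
    by (induction b rule: poly_mapping_add_single_induct)
      (simp_all add: distrib_left mpoly_eval_add mult_single monom_eval_add hom_mult ac_simps)
  with add_single show ?case
    by (simp add: distrib_right mpoly_eval_add)
qed

lemma ring_hom_mpoly_eval: "ring_hom (mpoly_eval H \<sigma>)"
proof
  show "mpoly_eval H \<sigma> 1 = 1"
    using mpoly_eval_single[of \<sigma> 0 1] by (simp add: hom_1 flip: single_one)
qed (simp_all add: mpoly_eval_add mpoly_eval_mult)

lemma mpoly_eval_mvar [simp]: "mpoly_eval H \<sigma> (mvar i) = \<sigma> i"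
  by (simp add: mvar_def monom_eval_def hom_1)

lemma hom_mpoly_eval:
  "H (mpoly_eval \<kappa> \<sigma> q) = mpoly_eval (\<lambda>c. H (\<kappa> c)) (\<lambda>i. H (\<sigma> i)) q"
  by (simp add: mpoly_eval_def monom_eval_def hom_sum hom_mult hom_prod hom_power)

end

abbreviation mconst :: "'k::comm_ring_1 \<Rightarrow> 'k mpoly" where
  "mconst c \<equiv> Poly_Mapping.single 0 c"

interpretation mconst: ring_hom "mconst :: 'k::comm_ring_1 \<Rightarrow> 'k mpoly"
  by unfold_locales (simp_all add: single_add mult_single)

definition msubst :: "(nat \<Rightarrow> 'k::comm_ring_1 mpoly) \<Rightarrow> 'k mpoly \<Rightarrow> 'k mpoly" where
  "msubst \<sigma> = mpoly_eval mconst \<sigma>"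

lemma ring_hom_msubst: "ring_hom (msubst \<sigma>)"
  unfolding msubst_def by (rule mconst.ring_hom_mpoly_eval)

lemma msubst_mvar [simp]: "msubst \<sigma> (mvar i) = \<sigma> i"
  by (simp add: msubst_def)

lemma msubst_mconst [simp]: "msubst \<sigma> (mconst c) = mconst c"
  by (simp add: msubst_def)

lemma monom_eval_mvar: "monom_eval mvar m = (Poly_Mapping.single m 1 :: 'k::comm_ring_1 mpoly)"
proof -
  have "(mvar i :: 'k mpoly) ^ k = Poly_Mapping.single (Poly_Mapping.single i k) 1" for i k
    by (induction k) (simp_all add: mvar_def mult_single add.commute flip: single_add)
  moreover have "(\<Prod>i\<in>A. Poly_Mapping.single (f i) (1::'k)) = Poly_Mapping.single (sum f A) 1"
    for A and f :: "nat \<Rightarrow> nat \<Rightarrow>\<^sub>0 nat"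
    by (induction A rule: infinite_finite_induct) (simp_all add: mult_single)
  moreover have "(\<Sum>i\<in>Poly_Mapping.keys m. Poly_Mapping.single i (Poly_Mapping.lookup m i)) = m"
    by (rule poly_mapping_eqI) (auto simp: lookup_sum lookup_single when_def in_keys_iff)
  ultimately show ?thesis
    by (simp add: monom_eval_def)
qed

lemma msubst_mvar_id [simp]: "msubst mvar q = q"
proof (induction q rule: poly_mapping_add_single_induct)
  case (add_single f m c)
  then show ?case
    by (simp add: msubst_def mconst.mpoly_eval_add monom_eval_mvar mult_single)
qed (simp add: msubst_def)

lemma msubst_msubst: "msubst \<sigma> (msubst \<tau> q) = msubst (\<lambda>i. msubst \<sigma> (\<tau> i)) q"
proof -
  interpret \<sigma>: ring_hom "msubst \<sigma>"
    by (rule ring_hom_msubst)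
  show ?thesis
    unfolding msubst_def[of \<tau>] \<sigma>.hom_mpoly_eval by (simp add: msubst_def)
qed

section \<open>Polynomial subrings and generated ideals\<close>

lemma poly_ring_in_mconst [simp]: "mconst c \<in> poly_ring_in V"
  by (simp add: poly_ring_in_def)

lemma poly_ring_in_0 [simp]: "0 \<in> poly_ring_in V"
  by (simp add: poly_ring_in_def)

lemma poly_ring_in_1 [simp]: "1 \<in> poly_ring_in V"
  using poly_ring_in_mconst[of 1 V] by (simp only: single_one)

lemma poly_ring_in_mono: "V \<subseteq> W \<Longrightarrow> poly_ring_in V \<subseteq> poly_ring_in W"
  unfolding poly_ring_in_def by blast

lemma mvar_in_poly_ring_in_iff [simp]: "mvar i \<in> poly_ring_in V \<longleftrightarrow> i \<in> V"
  by (simp add: poly_ring_in_def mvar_def)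

lemma poly_ring_in_add [simp]:
  "a \<in> poly_ring_in V \<Longrightarrow> b \<in> poly_ring_in V \<Longrightarrow> a + b \<in> poly_ring_in V"
  using keys_add[of a b] unfolding poly_ring_in_def by blast

lemma poly_ring_in_uminus [simp]: "a \<in> poly_ring_in V \<Longrightarrow> - a \<in> poly_ring_in V"
  by (simp add: poly_ring_in_def)

lemma poly_ring_in_diff [simp]:
  "a \<in> poly_ring_in V \<Longrightarrow> b \<in> poly_ring_in V \<Longrightarrow> a - b \<in> poly_ring_in V"
  using poly_ring_in_add[of a V "- b"] by simp

lemma poly_ring_in_mult [simp]:
  assumes "a \<in> poly_ring_in V" "b \<in> poly_ring_in V"
  shows "a * b \<in> poly_ring_in V"
  unfolding poly_ring_in_def mem_Collect_eq
proof (intro ballI)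
  fix m
  assume "m \<in> Poly_Mapping.keys (a * b)"
  then obtain x y where "m = x + y" "x \<in> Poly_Mapping.keys a" "y \<in> Poly_Mapping.keys b"
    using keys_mult[of a b] by blast
  moreover have "Poly_Mapping.keys (x + y) = Poly_Mapping.keys x \<union> Poly_Mapping.keys y"
    by (auto simp: in_keys_iff lookup_add)
  ultimately show "Poly_Mapping.keys m \<subseteq> V"
    using assms by (auto simp: poly_ring_in_def)
qed

lemma poly_ring_in_sum: "(\<And>x. x \<in> A \<Longrightarrow> f x \<in> poly_ring_in V) \<Longrightarrow> sum f A \<in> poly_ring_in V"
  by (induction A rule: infinite_finite_induct) auto

lemma poly_ring_in_prod: "(\<And>x. x \<in> A \<Longrightarrow> f x \<in> poly_ring_in V) \<Longrightarrow> prod f A \<in> poly_ring_in V"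
  by (induction A rule: infinite_finite_induct) auto

lemma poly_ring_in_power: "a \<in> poly_ring_in V \<Longrightarrow> a ^ n \<in> poly_ring_in V"
  by (induction n) auto

lemma msubst_in_poly_ring_in:
  "(\<And>i. \<sigma> i \<in> poly_ring_in V) \<Longrightarrow> msubst \<sigma> q \<in> poly_ring_in V"
  unfolding msubst_def mpoly_eval_def monom_eval_def
  by (intro poly_ring_in_sum poly_ring_in_mult poly_ring_in_prod poly_ring_in_power) auto

lemma msubst_cong:
  "q \<in> poly_ring_in V \<Longrightarrow> (\<And>i. i \<in> V \<Longrightarrow> \<sigma> i = \<tau> i) \<Longrightarrow> msubst \<sigma> q = msubst \<tau> q"
  unfolding msubst_def by (rule mpoly_eval_cong)

definition subring :: "'a::comm_ring_1 set \<Rightarrow> bool" where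
  "subring R \<longleftrightarrow> 0 \<in> R \<and> 1 \<in> R \<and> (\<forall>x\<in>R. - x \<in> R) \<and> (\<forall>x\<in>R. \<forall>y\<in>R. x + y \<in> R \<and> x * y \<in> R)"

lemma subring_UNIV: "subring UNIV"
  by (simp add: subring_def)

lemma subring_poly_ring_in: "subring (poly_ring_in V)"
  by (simp add: subring_def)

lemma gen_ideal_intro:
  "x = (\<Sum>g\<in>G. c g * g) \<Longrightarrow> (\<And>g. g \<in> G \<Longrightarrow> c g \<in> R) \<Longrightarrow> x \<in> gen_ideal R G"
  unfolding gen_ideal_def by blast

lemma gen_ideal_0: "subring R \<Longrightarrow> 0 \<in> gen_ideal R G"
  by (rule gen_ideal_intro[where c = "\<lambda>_. 0"]) (simp_all add: subring_def)

lemma gen_ideal_add: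
  assumes "subring R" "x \<in> gen_ideal R G" "y \<in> gen_ideal R G"
  shows "x + y \<in> gen_ideal R G"
proof -
  obtain c d where "x = (\<Sum>g\<in>G. c g * g)" "y = (\<Sum>g\<in>G. d g * g)" "\<forall>g\<in>G. c g \<in> R \<and> d g \<in> R"
    using assms(2,3) unfolding gen_ideal_def by blast
  then show ?thesis
    using assms(1) unfolding subring_def
    by (intro gen_ideal_intro[where c = "\<lambda>g. c g + d g"]) (simp_all add: distrib_right sum.distrib)
qed

lemma gen_ideal_mult:
  assumes "subring R" "r \<in> R" "x \<in> gen_ideal R G"
  shows "r * x \<in> gen_ideal R G"
proof -
  obtain c where "x = (\<Sum>g\<in>G. c g * g)" "\<forall>g\<in>G. c g \<in> R"
    using assms(3) unfolding gen_ideal_def by blast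
  then show ?thesis
    using assms(1,2) unfolding subring_def
    by (intro gen_ideal_intro[where c = "\<lambda>g. r * c g"]) (simp_all add: sum_distrib_left mult.assoc)
qed

lemma gen_ideal_uminus: "subring R \<Longrightarrow> x \<in> gen_ideal R G \<Longrightarrow> - x \<in> gen_ideal R G"
  using gen_ideal_mult[of R "- 1" x G] by (simp add: subring_def)

lemma gen_ideal_diff:
  "subring R \<Longrightarrow> x \<in> gen_ideal R G \<Longrightarrow> y \<in> gen_ideal R G \<Longrightarrow> x - y \<in> gen_ideal R G"
  using gen_ideal_add[of R x G "- y"] by (simp add: gen_ideal_uminus)

lemma gen_ideal_sum:
  "subring R \<Longrightarrow> (\<And>i. i \<in> I \<Longrightarrow> f i \<in> gen_ideal R G) \<Longrightarrow> sum f I \<in> gen_ideal R G"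
  by (induction I rule: infinite_finite_induct) (simp_all add: gen_ideal_0 gen_ideal_add)

lemma gen_ideal_generator:
  assumes "subring R" "finite G" "g \<in> G"
  shows "g \<in> gen_ideal R G"
proof (rule gen_ideal_intro)
  have "(\<Sum>g'\<in>G. (if g' = g then 1 else 0) * g') = (\<Sum>g'\<in>G. if g' = g then g' else 0)"
    by (rule sum.cong) simp_all
  then show "g = (\<Sum>g'\<in>G. (if g' = g then 1 else 0) * g')"
    using assms(2,3) by simp
qed (use assms(1) in \<open>simp add: subring_def\<close>)

lemma subring_sum: "subring R \<Longrightarrow> (\<And>x. x \<in> A \<Longrightarrow> f x \<in> R) \<Longrightarrow> sum f A \<in> R"
  by (induction A rule: infinite_finite_induct) (simp_all add: subring_def)

lemma gen_ideal_subset_subring: "subring R \<Longrightarrow> G \<subseteq> R \<Longrightarrow> gen_ideal R G \<subseteq> R"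
  unfolding gen_ideal_def by (auto intro!: subring_sum) (auto simp: subring_def)

lemma gen_ideal_subset_gen_ideal:
  assumes "subring R" "R' \<subseteq> R" "G' \<subseteq> gen_ideal R G"
  shows "gen_ideal R' G' \<subseteq> gen_ideal R G"
  using assms unfolding gen_ideal_def[of R' G']
  by (auto intro!: gen_ideal_sum gen_ideal_mult)

lemma gen_ideal_image:
  assumes "finite A" "x \<in> gen_ideal R (f ` A)"
  obtains C where "x = (\<Sum>i\<in>A. C i * f i)"
proof -
  obtain c where x: "x = (\<Sum>g\<in>f ` A. c g * g)"
    using assms(2) unfolding gen_ideal_def by blast
  obtain B where B: "B \<subseteq> A" "inj_on f B" "f ` A = f ` B"
    using subset_image_inj[of "f ` A" f A] by blast
  have "x = (\<Sum>i\<in>B. c (f i) * f i)"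
    unfolding x B(3) using B(2) by (rule sum.reindex_cong) simp_all
  also have "\<dots> = (\<Sum>i\<in>A. (if i \<in> B then c (f i) else 0) * f i)"
    using assms(1) B(1) by (intro sum.mono_neutral_cong_left) auto
  finally show ?thesis
    by (rule that)
qed

lemma gen_ideal_UNIV_inter_poly_ring_in:
  fixes G :: "'k::comm_ring_1 mpoly set"
  assumes "G \<subseteq> poly_ring_in V"
  shows "gen_ideal UNIV G \<inter> poly_ring_in V = gen_ideal (poly_ring_in V) G"
proof
  let ?\<pi> = "msubst (\<lambda>i. if i \<in> V then mvar i else 0) :: 'k mpoly \<Rightarrow> 'k mpoly"
  interpret \<pi>: ring_hom ?\<pi>
    by (rule ring_hom_msubst)
  have \<pi>_id: "?\<pi> q = q" if "q \<in> poly_ring_in V" for q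
    using msubst_cong[OF that, of _ mvar] by simp
  show "gen_ideal UNIV G \<inter> poly_ring_in V \<subseteq> gen_ideal (poly_ring_in V) G"
  proof
    fix x
    assume x: "x \<in> gen_ideal UNIV G \<inter> poly_ring_in V"
    then obtain c where c: "x = (\<Sum>g\<in>G. c g * g)"
      unfolding gen_ideal_def by blast
    have "x = ?\<pi> x"
      using x by (simp add: \<pi>_id)
    also have "\<dots> = (\<Sum>g\<in>G. ?\<pi> (c g) * g)"
      unfolding c \<pi>.hom_sum \<pi>.hom_mult using assms by (intro sum.cong) (auto simp: \<pi>_id)
    finally show "x \<in> gen_ideal (poly_ring_in V) G"
      by (rule gen_ideal_intro) (simp add: msubst_in_poly_ring_in)
  qed
  have "gen_ideal (poly_ring_in V) G \<subseteq> gen_ideal UNIV G"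
    unfolding gen_ideal_def by blast
  then show "gen_ideal (poly_ring_in V) G \<subseteq> gen_ideal UNIV G \<inter> poly_ring_in V"
    using gen_ideal_subset_subring[OF subring_poly_ring_in assms] by blast
qed

section \<open>Koszul syzygies\<close>

definition koszul_syzygies :: "'i set \<Rightarrow> ('i \<Rightarrow> 'a::comm_ring_1) \<Rightarrow> bool" where
  "koszul_syzygies V z \<longleftrightarrow> (\<forall>u. (\<Sum>j\<in>V. u j * z j) = 0 \<longrightarrow>
     (\<exists>W. (\<forall>j k. W j k = - W k j) \<and> (\<forall>j. W j j = 0) \<and> (\<forall>j\<in>V. u j = (\<Sum>k\<in>V. W j k * z k))))"

lemma koszul_syzygiesD:
  assumes "koszul_syzygies V z" "(\<Sum>j\<in>V. u j * z j) = 0"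
  obtains W where "\<And>j k. W j k = - W k j" "\<And>j. W j j = 0"
    "\<And>j. j \<in> V \<Longrightarrow> u j = (\<Sum>k\<in>V. W j k * z k)"
  using assms unfolding koszul_syzygies_def by blast

lemma mvar_neq_0: "(mvar n :: 'k::comm_ring_1 mpoly) \<noteq> 0"
  unfolding mvar_def by (metis lookup_single_eq lookup_zero one_neq_zero)

lemma mvar_dvd_diff_msubst_0: "mvar n dvd q - msubst (mvar(n := 0)) q"
proof (induction q rule: poly_mapping_add_single_induct)
  case zero
  then show ?case
    by (simp add: ring_hom.hom_0[OF ring_hom_msubst])
next
  case (add_single f m c)
  have "mvar n dvd Poly_Mapping.single m c - msubst (mvar(n := 0)) (Poly_Mapping.single m c)"
  proof (cases "n \<in> Poly_Mapping.keys m")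
    case True
    then have "monom_eval (mvar(n := 0)) m = 0"
      unfolding monom_eval_def by (intro prod_zero bexI[of _ n]) (auto simp: in_keys_iff zero_power)
    then have "msubst (mvar(n := 0)) (Poly_Mapping.single m c) = 0"
      by (metis msubst_def mconst.mpoly_eval_single mult_zero_right)
    moreover have "Poly_Mapping.single m c = mvar n * Poly_Mapping.single (m - Poly_Mapping.single n 1) c"
    proof -
      have "Poly_Mapping.single n 1 + (m - Poly_Mapping.single n 1) = m"
        using True by (intro poly_mapping_eqI)
          (auto simp: lookup_add lookup_minus lookup_single when_def in_keys_iff)
      then show ?thesis
        by (simp add: mvar_def mult_single)
    qed
    ultimately show ?thesis
      by (metis diff_zero dvd_triv_left)
  next
    case False
    have "Poly_Mapping.single m c \<in> poly_ring_in (Poly_Mapping.keys m)"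
      by (simp add: poly_ring_in_def)
    then have "msubst (mvar(n := 0)) (Poly_Mapping.single m c) = msubst mvar (Poly_Mapping.single m c)"
      using False by (intro msubst_cong) auto
    then show ?thesis
      by simp
  qed
  moreover have "f + s - msubst (mvar(n := 0)) (f + s) =
      (f - msubst (mvar(n := 0)) f) + (s - msubst (mvar(n := 0)) s)" for s
    by (simp add: ring_hom.hom_add[OF ring_hom_msubst])
  ultimately show ?case
    using add_single by (metis dvd_add)
qed

lemma alternating_matrix_insert:
  fixes z u v :: "'i \<Rightarrow> 'a::comm_ring_1"
  assumes "finite V" "n \<notin> V"
    and W: "\<And>j k. W j k = - W k j" "\<And>j. W j j = 0"
    and u_V: "\<And>j. j \<in> V \<Longrightarrow> u j = (\<Sum>k\<in>V. W j k * z k) + v j * z n"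
    and u_n: "u n = - (\<Sum>k\<in>V. v k * z k)"
  obtains W' where "\<And>j k. W' j k = - W' k j" "\<And>j. W' j j = 0"
    "\<And>j. j \<in> insert n V \<Longrightarrow> u j = (\<Sum>k\<in>insert n V. W' j k * z k)"
proof
  define W' where "W' j k = (if j = n \<and> k = n then 0 else if k = n then v j
    else if j = n then - v k else W j k)" for j k
  show "W' j k = - W' k j" for j k
    using W(1)[of j k] by (auto simp: W'_def)
  show "W' j j = 0" for j
    using W(2) by (simp add: W'_def)
  show "u j = (\<Sum>k\<in>insert n V. W' j k * z k)" if "j \<in> insert n V" for j
  proof (cases "j = n")
    case True
    have "(\<Sum>k\<in>V. W' j k * z k) = (\<Sum>k\<in>V. - v k * z k)"
      using assms(2) True by (intro sum.cong) (auto simp: W'_def)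
    then show ?thesis
      using assms(1,2) True u_n by (simp add: W'_def sum_negf)
  next
    case False
    then have "j \<in> V"
      using that by simp
    have "(\<Sum>k\<in>V. W' j k * z k) = (\<Sum>k\<in>V. W j k * z k)"
      using assms(2) False by (intro sum.cong) (auto simp: W'_def)
    then show ?thesis
      using assms(1,2) False u_V[OF \<open>j \<in> V\<close>] by (simp add: W'_def add.commute)
  qed
qed

lemma syzygy_mvar_insert:
  fixes u :: "nat \<Rightarrow> 'k::idom mpoly"
  assumes "finite V" "n \<notin> V" and syz: "(\<Sum>j\<in>insert n V. u j * mvar j) = 0"
  obtains v where "(\<Sum>j\<in>V. msubst (mvar(n := 0)) (u j) * mvar j) = 0"
    and "\<And>j. u j = msubst (mvar(n := 0)) (u j) + v j * mvar n"
    and "u n = - (\<Sum>j\<in>V. v j * mvar j)"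
proof -
  define \<pi> :: "'k mpoly \<Rightarrow> 'k mpoly" where "\<pi> = msubst (mvar(n := 0))"
  interpret \<pi>: ring_hom \<pi>
    unfolding \<pi>_def by (rule ring_hom_msubst)
  have "\<forall>j. \<exists>v. u j - \<pi> (u j) = mvar n * v"
    using mvar_dvd_diff_msubst_0 unfolding \<pi>_def dvd_def by blast
  then obtain v where v: "\<And>j. u j = \<pi> (u j) + v j * mvar n"
    by (metis diff_eq_eq add.commute mult.commute)
  have "\<pi> (mvar n) = 0" "\<forall>j\<in>V. \<pi> (mvar j) = mvar j"
    using assms(2) by (auto simp: \<pi>_def)
  then have "(\<Sum>j\<in>V. \<pi> (u j) * mvar j) = \<pi> (\<Sum>j\<in>insert n V. u j * mvar j)"
    using assms(1,2) by (simp add: \<pi>.hom_add \<pi>.hom_sum \<pi>.hom_mult cong: sum.cong)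
  also have "\<dots> = 0"
    by (simp add: syz \<pi>.hom_0)
  finally have syz_\<pi>: "(\<Sum>j\<in>V. \<pi> (u j) * mvar j) = 0" .
  have "0 = u n * mvar n + (\<Sum>j\<in>V. u j * mvar j)"
    using syz assms(1,2) by simp
  also have "(\<Sum>j\<in>V. u j * mvar j) = (\<Sum>j\<in>V. \<pi> (u j) * mvar j) + mvar n * (\<Sum>j\<in>V. v j * mvar j)"
    by (subst (1) v) (simp add: algebra_simps sum.distrib sum_distrib_left)
  finally have "mvar n * (u n + (\<Sum>j\<in>V. v j * mvar j)) = 0"
    using syz_\<pi> by (simp add: algebra_simps)
  then have "u n = - (\<Sum>j\<in>V. v j * mvar j)"
    using mvar_neq_0[of n] by (auto simp: eq_neg_iff_add_eq_0)
  with syz_\<pi> v show ?thesis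
    unfolding \<pi>_def by (rule that)
qed

lemma koszul_syzygies_mvar:
  assumes "finite V"
  shows "koszul_syzygies V (mvar :: nat \<Rightarrow> 'k::idom mpoly)"
  using assms
proof (induction V rule: finite_induct)
  case empty
  show ?case
    by (auto simp: koszul_syzygies_def intro: exI[of _ "\<lambda>_ _. 0"])
next
  case (insert n V)
  show ?case
    unfolding koszul_syzygies_def
  proof (intro allI impI)
    fix u :: "nat \<Rightarrow> 'k mpoly"
    assume "(\<Sum>j\<in>insert n V. u j * mvar j) = 0"
    then obtain v where syz_V: "(\<Sum>j\<in>V. msubst (mvar(n := 0)) (u j) * mvar j) = 0"
      and v: "\<And>j. u j = msubst (mvar(n := 0)) (u j) + v j * mvar n"
      and u_n: "u n = - (\<Sum>j\<in>V. v j * mvar j)"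
      using syzygy_mvar_insert[OF insert.hyps] by blast
    obtain W where W: "\<And>j k. W j k = - W k j" "\<And>j. W j j = 0"
      "\<And>j. j \<in> V \<Longrightarrow> msubst (mvar(n := 0)) (u j) = (\<Sum>k\<in>V. W j k * mvar k)"
      using koszul_syzygiesD[OF insert.IH syz_V] by blast
    have u_V: "u j = (\<Sum>k\<in>V. W j k * mvar k) + v j * mvar n" if "j \<in> V" for j
      using v[of j] W(3) that by simp
    obtain W' where "\<And>j k. W' j k = - W' k j" "\<And>j. W' j j = 0"
      "\<And>j. j \<in> insert n V \<Longrightarrow> u j = (\<Sum>k\<in>insert n V. W' j k * mvar k)"
      using alternating_matrix_insert[OF insert.hyps W(1,2) u_V u_n] by blast
    then show "\<exists>W. (\<forall>j k. W j k = - W k j) \<and> (\<forall>j. W j j = 0) \<and>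
        (\<forall>j\<in>insert n V. u j = (\<Sum>k\<in>insert n V. W j k * mvar k))"
      by blast
  qed
qed

lemma koszul_syzygies_transfer:
  assumes "koszul_syzygies V x" "ring_hom \<phi>" "ring_hom \<psi>"
    and \<phi>_\<psi>: "\<And>y. \<phi> (\<psi> y) = y" and \<psi>_z: "\<And>j. j \<in> V \<Longrightarrow> \<psi> (z j) = x j"
  shows "koszul_syzygies V z"
  unfolding koszul_syzygies_def
proof (intro allI impI)
  interpret \<phi>: ring_hom \<phi> by fact
  interpret \<psi>: ring_hom \<psi> by fact
  fix u
  assume "(\<Sum>j\<in>V. u j * z j) = 0"
  then have "\<psi> (\<Sum>j\<in>V. u j * z j) = 0"
    by (simp add: \<psi>.hom_0)
  then have syz_x: "(\<Sum>j\<in>V. \<psi> (u j) * x j) = 0"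
    by (simp add: \<psi>.hom_sum \<psi>.hom_mult \<psi>_z cong: sum.cong)
  obtain W where W: "\<And>j k. W j k = - W k j" "\<And>j. W j j = 0"
    "\<And>j. j \<in> V \<Longrightarrow> \<psi> (u j) = (\<Sum>k\<in>V. W j k * x k)"
    using koszul_syzygiesD[OF assms(1) syz_x] by blast
  have "u j = (\<Sum>k\<in>V. \<phi> (W j k) * z k)" if "j \<in> V" for j
  proof -
    have "u j = \<phi> (\<psi> (u j))"
      by (simp add: \<phi>_\<psi>)
    also have "\<dots> = (\<Sum>k\<in>V. \<phi> (W j k) * \<phi> (\<psi> (z k)))"
      using that by (simp add: W(3) \<phi>.hom_sum \<phi>.hom_mult \<psi>_z cong: sum.cong)
    finally show ?thesis
      by (simp add: \<phi>_\<psi>)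
  qed
  moreover have "\<phi> (W j k) = - \<phi> (W k j)" for j k
    by (subst W(1)) (rule \<phi>.hom_uminus)
  moreover have "\<phi> (W j j) = 0" for j
    using W(2) by (simp add: \<phi>.hom_0)
  ultimately show "\<exists>W. (\<forall>j k. W j k = - W k j) \<and> (\<forall>j. W j j = 0) \<and>
      (\<forall>j\<in>V. u j = (\<Sum>k\<in>V. W j k * z k))"
    by (intro exI[of _ "\<lambda>j k. \<phi> (W j k)"]) blast
qed

lemma sum_alternating_combination:
  fixes W :: "'i::linorder \<Rightarrow> 'i \<Rightarrow> 'a::comm_ring_1"
  assumes alt: "\<And>j k. W j k = - W k j" and diag: "\<And>j. W j j = 0"
    and u: "\<And>j. j \<in> V \<Longrightarrow> u j = (\<Sum>k\<in>V. W j k * z k)"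
  shows "(\<Sum>j\<in>V. u j * c j) =
    (\<Sum>j\<in>V. \<Sum>k\<in>V. if j < k then W j k * (z k * c j - z j * c k) else 0)"
proof -
  define T where "T j k = W j k * (z k * c j)" for j k
  have "(\<Sum>j\<in>V. u j * c j) = (\<Sum>j\<in>V. \<Sum>k\<in>V. T j k)"
    using u by (simp add: T_def sum_distrib_right mult.assoc)
  also have "\<dots> = (\<Sum>j\<in>V. \<Sum>k\<in>V. (if j < k then T j k else 0) + (if k < j then T j k else 0))"
    by (intro sum.cong refl) (auto simp: T_def diag)
  also have "\<dots> = (\<Sum>j\<in>V. \<Sum>k\<in>V. if j < k then T j k else 0) +
      (\<Sum>k\<in>V. \<Sum>j\<in>V. if k < j then T j k else 0)"
    by (simp only: sum.distrib add_left_cancel) (rule sum.swap)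
  also have "\<dots> = (\<Sum>j\<in>V. \<Sum>k\<in>V. if j < k then T j k + T k j else 0)"
    by (simp only: sum.distrib[symmetric]) (intro sum.cong refl, simp)
  also have "\<dots> = (\<Sum>j\<in>V. \<Sum>k\<in>V. if j < k then W j k * (z k * c j - z j * c k) else 0)"
  proof -
    have "T j k + T k j = W j k * (z k * c j - z j * c k)" for j k
      using alt[of k j] by (simp add: T_def algebra_simps)
    then show ?thesis
      by (simp only:)
  qed
  finally show ?thesis .
qed

definition shear :: "nat \<Rightarrow> nat \<Rightarrow> 'k::comm_ring_1 mpoly" where
  "shear p j = (if p < j \<and> j < 2*p then mvar j - mvar (j - p) * mvar p else mvar j)"

definition unshear :: "nat \<Rightarrow> nat \<Rightarrow> 'k::comm_ring_1 mpoly" where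
  "unshear p j = (if p < j \<and> j < 2*p then mvar j + mvar (j - p) * mvar p else mvar j)"

lemma msubst_unshear_shear: "msubst (unshear p) (shear p j) = mvar j"
proof -
  interpret ring_hom "msubst (unshear p)"
    by (rule ring_hom_msubst)
  show ?thesis
    by (auto simp: shear_def unshear_def hom_diff hom_mult)
qed

lemma msubst_shear_unshear: "msubst (shear p) (unshear p j) = mvar j"
proof -
  interpret ring_hom "msubst (shear p)"
    by (rule ring_hom_msubst)
  show ?thesis
    by (auto simp: shear_def unshear_def hom_add hom_mult)
qed

lemma koszul_syzygies_shear:
  assumes "finite V"
  shows "koszul_syzygies V (shear p :: nat \<Rightarrow> 'k::idom mpoly)"
  by (rule koszul_syzygies_transfer[OF koszul_syzygies_mvar[OF assms]
        ring_hom_msubst[of "shear p"] ring_hom_msubst[of "unshear p"]])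
    (simp_all add: msubst_msubst msubst_shear_unshear msubst_unshear_shear)

section \<open>Elimination of t\<close>

lemma monic_quadratic_remainder:
  fixes F C :: "'a::comm_ring_1 poly"
  assumes "degree F = 2" "lead_coeff F = 1"
  shows "\<exists>Q a b. C = F * Q + [:a, b:]"
proof -
  have "F \<noteq> 0"
    using assms by auto
  obtain Q R where QR: "pseudo_divmod C F = (Q, R)"
    by (cases "pseudo_divmod C F")
  have "C = F * Q + R"
    using pseudo_divmod(1)[OF \<open>F \<noteq> 0\<close> QR] assms by simp
  moreover have "R = [:coeff R 0, coeff R 1:]"
    using pseudo_divmod(2)[OF \<open>F \<noteq> 0\<close> QR] assms
    by (auto simp: poly_eq_iff coeff_pCons split: nat.split intro: coeff_eq_0)
  ultimately show ?thesis
    by metis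
qed

lemma mult_quadratic_degree_le_2_imp_const:
  fixes F W :: "'a::idom poly"
  assumes "degree F = 2" "degree (F * W) \<le> 2"
  shows "W = [:coeff W 0:]"
proof (cases "W = 0")
  case False
  have "F \<noteq> 0"
    using assms(1) by auto
  with False assms have "degree W = 0"
    by (simp add: degree_mult_eq)
  then show ?thesis
    by (simp add: degree_0_id)
qed simp

lemma coeff_linear_mult:
  "coeff ([:a, b:] * [:c, d:]) 0 = a * c"
  "coeff ([:a, b:] * [:c, d:]) 1 = a * d + b * c"
  "coeff ([:a, b:] * [:c, d:]) 2 = b * d"
  by (simp_all add: numeral_2_eq_2 algebra_simps)

lemma constant_mod_monic_quadratic:
  fixes F :: "'a::idom poly" and G C :: "'i \<Rightarrow> 'a poly"
  assumes "finite A" and F: "degree F = 2" "lead_coeff F = 1" and G: "\<And>i. degree (G i) \<le> 1"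
    and h: "[:h:] = C0 * F + (\<Sum>i\<in>A. C i * G i)"
  obtains a b w where "[:h:] = F * [:w:] + (\<Sum>i\<in>A. [:a i, b i:] * G i)"
proof -
  have "\<forall>i. \<exists>Q a b. C i = F * Q + [:a, b:]"
    using monic_quadratic_remainder[OF F] by blast
  then obtain Q a b where QR: "\<And>i. C i = F * Q i + [:a i, b i:]"
    by metis
  define L where "L = (\<Sum>i\<in>A. [:a i, b i:] * G i)"
  have "(\<Sum>i\<in>A. C i * G i) = (\<Sum>i\<in>A. F * (Q i * G i) + [:a i, b i:] * G i)"
    by (simp only: QR distrib_right mult.assoc)
  also have "\<dots> = F * (\<Sum>i\<in>A. Q i * G i) + L"
    by (simp only: sum.distrib sum_distrib_left L_def)
  finally have "[:h:] - L = F * (C0 + (\<Sum>i\<in>A. Q i * G i))"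
    using h by (simp add: algebra_simps)
  moreover have "degree ([:h:] - L) \<le> 2"
    unfolding L_def using \<open>finite A\<close> G
    by (intro degree_diff_le degree_sum_le order.trans[OF degree_mult_le]) (auto intro: order_trans[OF G])
  ultimately obtain w where "[:h:] - L = F * [:w:]"
    using mult_quadratic_degree_le_2_imp_const[OF F(1)] by metis
  then show ?thesis
    by (intro that[of w a b]) (simp add: L_def algebra_simps)
qed

lemma constant_in_quadratic_linear_ideal:
  fixes h c d :: "'a::idom" and g e :: "'i \<Rightarrow> 'a"
  assumes "finite A" and "[:h:] = C0 * [:c, d, 1:] + (\<Sum>i\<in>A. C i * [:g i, e i:])"
  obtains a b where "h = (\<Sum>i\<in>A. a i * g i - c * (b i * e i))"
    and "(\<Sum>i\<in>A. a i * e i + b i * (g i - d * e i)) = 0"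
proof -
  obtain a b w where w: "[:h:] = [:c, d, 1:] * [:w:] + (\<Sum>i\<in>A. [:a i, b i:] * [:g i, e i:])"
    by (rule constant_mod_monic_quadratic[OF assms(1) _ _ _ assms(2)]) (simp_all add: numeral_2_eq_2)
  have "coeff [:h:] k = coeff ([:c, d, 1:] * [:w:] + (\<Sum>i\<in>A. [:a i, b i:] * [:g i, e i:])) k" for k
    by (subst w) (rule refl)
  from this[of 0] this[of 1] this[of 2]
  have c0: "h = c * w + (\<Sum>i\<in>A. a i * g i)"
    and c1: "0 = d * w + (\<Sum>i\<in>A. a i * e i + b i * g i)"
    and c2: "0 = w + (\<Sum>i\<in>A. b i * e i)"
    by (simp_all add: coeff_sum coeff_linear_mult numeral_2_eq_2 ac_simps)
  from c2 have w_eq: "w = - (\<Sum>i\<in>A. b i * e i)"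
    by (simp add: eq_neg_iff_add_eq_0)
  show ?thesis
  proof (rule that)
    show "h = (\<Sum>i\<in>A. a i * g i - c * (b i * e i))"
      using c0 unfolding w_eq by (simp add: sum_subtractf sum_distrib_left)
    have "(\<Sum>i\<in>A. a i * e i + b i * (g i - d * e i)) = d * w + (\<Sum>i\<in>A. a i * e i + b i * g i)"
      unfolding w_eq by (simp add: sum.distrib sum_subtractf sum_distrib_left right_diff_distrib ac_simps)
    then show "(\<Sum>i\<in>A. a i * e i + b i * (g i - d * e i)) = 0"
      using c1 by simp
  qed
qed

interpretation poly_const: ring_hom "\<lambda>c :: 'a::comm_ring_1. [:c:]"
  by unfold_locales simp_all

interpretation mconst_poly: ring_hom "\<lambda>c :: 'k::comm_ring_1. [:mconst c:]"
  by unfold_locales (simp_all add: mconst.hom_add mconst.hom_mult)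

definition poly_in_tvar :: "'k::comm_ring_1 mpoly \<Rightarrow> 'k mpoly poly" where
  "poly_in_tvar = mpoly_eval (\<lambda>c. [:mconst c:]) (\<lambda>i. if i = 0 then [:0, 1:] else [:mvar i:])"

lemma ring_hom_poly_in_tvar: "ring_hom poly_in_tvar"
  unfolding poly_in_tvar_def by (rule mconst_poly.ring_hom_mpoly_eval)

lemma poly_in_tvar_const:
  assumes "q \<in> poly_ring_in V" "0 \<notin> V"
  shows "poly_in_tvar q = [:q:]"
proof -
  have "poly_in_tvar q = mpoly_eval (\<lambda>c. [:mconst c:]) (\<lambda>i. [:mvar i:]) q"
    unfolding poly_in_tvar_def using assms by (intro mpoly_eval_cong[where V = V]) (auto intro!: gr0I)
  also have "\<dots> = [:msubst mvar q:]"
    by (simp add: msubst_def poly_const.hom_mpoly_eval)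
  finally show ?thesis
    by simp
qed

lemma poly_in_tvar_mvar: "poly_in_tvar (mvar i) = (if i = 0 then [:0, 1:] else [:mvar i:])"
  by (simp add: poly_in_tvar_def)

lemma poly_in_tvar_fgen:
  assumes "p \<ge> 1"
  shows "poly_in_tvar (fgen p 0) = [:mvar (2*p), mvar p, 1:]"
    and "i \<ge> 1 \<Longrightarrow> poly_in_tvar (fgen p i) = [:mvar (p + i), mvar i:]"
proof -
  interpret ring_hom poly_in_tvar
    by (rule ring_hom_poly_in_tvar)
  show "poly_in_tvar (fgen p 0) = [:mvar (2*p), mvar p, 1:]"
    using assms by (simp add: fgen_def tvar_def evar_def poly_in_tvar_mvar hom_add hom_mult
        hom_power power2_eq_square)
  show "i \<ge> 1 \<Longrightarrow> poly_in_tvar (fgen p i) = [:mvar (p + i), mvar i:]"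
    by (simp add: fgen_def tvar_def evar_def poly_in_tvar_mvar hom_add hom_mult)
qed

text \<open>Index j < p stands for the coefficient a_j, which multiplies e_j in the syzygy, and index
  p + i for b_i, which multiplies e_(p+i) - e_p e_i.\<close>
definition syz_vars :: "nat \<Rightarrow> nat set" where
  "syz_vars p = {1..<p} \<union> {p+1..<2*p}"

definition cofactor :: "nat \<Rightarrow> nat \<Rightarrow> 'k::comm_ring_1 mpoly" where
  "cofactor p j = (if j < p then mvar (p + j) else - (mvar (2*p) * mvar (j - p)))"

lemma sum_syz_vars: "(\<Sum>j\<in>syz_vars p. f j) = (\<Sum>i\<in>{1..<p}. f i + f (p + i))"
proof -
  have "(\<Sum>j\<in>syz_vars p. f j) = (\<Sum>i\<in>{1..<p}. f i) + (\<Sum>j\<in>{1+p..<p+p}. f j)"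
    unfolding syz_vars_def by (subst sum.union_disjoint) (auto simp: mult_2 intro!: sum.cong)
  also have "(\<Sum>j\<in>{1+p..<p+p}. f j) = (\<Sum>i\<in>{1..<p}. f (i + p))"
    by (rule sum.shift_bounds_nat_ivl)
  finally show ?thesis
    by (simp add: sum.distrib add.commute)
qed

lemma elimination_syzygy:
  fixes h :: "'k::idom mpoly"
  assumes "p \<ge> 1" "h \<in> ringS p" "h = (\<Sum>i\<in>{0..<p}. C i * fgen p i)"
  obtains u where "h = (\<Sum>j\<in>syz_vars p. u j * cofactor p j)"
    and "(\<Sum>j\<in>syz_vars p. u j * shear p j) = 0"
proof -
  interpret t: ring_hom poly_in_tvar
    by (rule ring_hom_poly_in_tvar)
  have "[:h:] = poly_in_tvar h"
    using assms(2) unfolding ringS_def by (intro poly_in_tvar_const[symmetric]) auto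
  also have "\<dots> = poly_in_tvar (C 0) * [:mvar (2*p), mvar p, 1:] +
      (\<Sum>i\<in>{1..<p}. poly_in_tvar (C i) * [:mvar (p + i), mvar i:])"
    using assms(1)
    by (simp add: assms(3) t.hom_add t.hom_sum t.hom_mult sum.atLeast_Suc_lessThan poly_in_tvar_fgen)
  finally obtain a b where
    h: "h = (\<Sum>i\<in>{1..<p}. a i * mvar (p + i) - mvar (2*p) * (b i * mvar i))" and
    syz: "(\<Sum>i\<in>{1..<p}. a i * mvar i + b i * (mvar (p + i) - mvar p * mvar i)) = 0"
    by (rule constant_in_quadratic_linear_ideal[OF finite_atLeastLessThan])
  define u where "u j = (if j < p then a j else b (j - p))" for j
  show ?thesis
  proof (rule that[of u])
    show "h = (\<Sum>j\<in>syz_vars p. u j * cofactor p j)"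
      unfolding h sum_syz_vars by (intro sum.cong) (auto simp: u_def cofactor_def)
    show "(\<Sum>j\<in>syz_vars p. u j * shear p j) = 0"
      unfolding syz[symmetric] sum_syz_vars
      by (intro sum.cong) (auto simp: u_def shear_def mult.commute)
  qed
qed

section \<open>The 3 x 3 minors\<close>

lemma det3_swap_23: "det3 A a c b = - det3 A a b c"
  by (simp add: det3_def algebra_simps)

lemma det3_eq_column_combination:
  fixes A :: "nat \<Rightarrow> nat \<Rightarrow> 'a::comm_ring_1" and T :: 'a
  defines "g j \<equiv> T * T * A 0 j + T * A 1 j + A 2 j"
  shows "det3 A a b c = (A 0 b * A 1 c - A 0 c * A 1 b) * g a
    - (A 0 a * A 1 c - A 0 c * A 1 a) * g b + (A 0 a * A 1 b - A 0 b * A 1 a) * g c"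
  unfolding det3_def g_def by (simp add: algebra_simps)

lemma Mat_col_0: "Mat p r 0 = (if r = 0 then 1 else if r = 1 then evar p else evar (2 * p))"
  by (simp add: Mat_def)

definition minor_col :: "nat \<Rightarrow> nat \<Rightarrow> nat" where
  "minor_col p j = (if j < p then 2 * j else 2 * (j - p) - 1)"

lemma Mat_odd_col:
  "1 \<le> i \<Longrightarrow> Mat p r (2 * i - 1) = (if r = 0 then evar i else if r = 1 then evar (p + i) else 0)"
  by (auto simp: Mat_def Let_def elim: oddE)

lemma Mat_even_col:
  "1 \<le> i \<Longrightarrow> Mat p r (2 * i) = (if r = 0 then 0 else if r = 1 then evar i else evar (p + i))"
  by (simp add: Mat_def Let_def)

lemma Mat_column_cases:
  fixes j p :: nat
  assumes "j < 2 * p - 1"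
  obtains "j = 0" | i where "1 \<le> i" "i < p" "j = 2 * i - 1" | i where "1 \<le> i" "i < p" "j = 2 * i"
proof (cases "j = 0")
  case False
  show ?thesis
  proof (cases "odd j")
    case True
    then show ?thesis
      using False assms by (intro that(2)[of "(j + 1) div 2"]) (auto elim!: oddE)
  next
    case False
    then show ?thesis
      using \<open>j \<noteq> 0\<close> assms by (intro that(3)[of "j div 2"]) (auto elim!: evenE)
  qed
qed (rule that(1))

lemma Mat_minor_col:
  assumes "j \<in> syz_vars p"
  shows "Mat p r (minor_col p j) = (if r = 0 then (if j < p then 0 else mvar (j - p))
    else if r = 1 then mvar j else if j < p then mvar (p + j) else 0)"
proof (cases "j < p")
  case True
  then have "minor_col p j = 2 * j" "1 \<le> j"
    using assms by (simp_all add: minor_col_def syz_vars_def)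
  with True show ?thesis
    by (simp add: Mat_even_col evar_def)
next
  case False
  then have col: "minor_col p j = 2 * (j - p) - 1" and "1 \<le> j - p"
    using assms by (auto simp: minor_col_def syz_vars_def)
  with False show ?thesis
    unfolding col Mat_odd_col[OF \<open>1 \<le> j - p\<close>] by (simp add: evar_def)
qed

lemma minor_col_bounds: "j \<in> syz_vars p \<Longrightarrow> 0 < minor_col p j \<and> minor_col p j < 2 * p - 1"
  by (auto simp: syz_vars_def minor_col_def)

lemma shear_cofactor_det3:
  assumes "j \<in> syz_vars p" "k \<in> syz_vars p"
  shows "shear p k * cofactor p j - shear p j * cofactor p k =
    - det3 (Mat p) 0 (minor_col p j) (minor_col p k)"
proof -
  have shear: "shear p x = Mat p 1 (minor_col p x) - Mat p 0 (minor_col p x) * mvar p"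
    and cofactor: "cofactor p x = Mat p 2 (minor_col p x) - mvar (2*p) * Mat p 0 (minor_col p x)"
    if "x \<in> syz_vars p" for x
    unfolding shear_def cofactor_def Mat_minor_col[OF that] using that by (auto simp: syz_vars_def)
  show ?thesis
    unfolding shear[OF assms(1)] shear[OF assms(2)] cofactor[OF assms(1)] cofactor[OF assms(2)]
      det3_def Mat_col_0 evar_def
    by (simp add: algebra_simps)
qed

lemma finite_minors3: "finite (minors3 p)"
proof -
  have "minors3 p \<subseteq> (\<lambda>(a, b, c). det3 (Mat p) a b c) ` ({..<2*p} \<times> {..<2*p} \<times> {..<2*p})"
    unfolding minors3_def by force
  then show ?thesis
    by (rule finite_subset) simp
qed

lemma det3_Mat_in_minors_ideal:
  "a < b \<Longrightarrow> b < c \<Longrightarrow> c < 2 * p - 1 \<Longrightarrow> det3 (Mat p) a b c \<in> gen_ideal UNIV (minors3 p)"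
  by (intro gen_ideal_generator subring_UNIV finite_minors3) (auto simp: minors3_def)

lemma shear_cofactor_in_minors_ideal:
  assumes "j \<in> syz_vars p" "k \<in> syz_vars p"
  shows "shear p k * cofactor p j - shear p j * cofactor p k
    \<in> gen_ideal UNIV (minors3 p :: 'k::comm_ring_1 mpoly set)"
proof -
  let ?b = "minor_col p j" and ?c = "minor_col p k"
  consider "?b < ?c" | "?b = ?c" | "?c < ?b"
    by linarith
  then have "det3 (Mat p) 0 ?b ?c \<in> gen_ideal UNIV (minors3 p :: 'k mpoly set)"
  proof cases
    case 1
    then show ?thesis
      using minor_col_bounds[OF assms(1)] minor_col_bounds[OF assms(2)]
      by (intro det3_Mat_in_minors_ideal) auto
  next
    case 2
    then show ?thesis
      by (simp add: det3_def gen_ideal_0 subring_UNIV)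
  next
    case 3
    then have "det3 (Mat p) 0 ?c ?b \<in> gen_ideal UNIV (minors3 p :: 'k mpoly set)"
      using minor_col_bounds[OF assms(1)] minor_col_bounds[OF assms(2)]
      by (intro det3_Mat_in_minors_ideal) auto
    then show ?thesis
      unfolding det3_swap_23[of _ _ ?b ?c] by (rule gen_ideal_uminus[OF subring_UNIV])
  qed
  then show ?thesis
    unfolding shear_cofactor_det3[OF assms] by (rule gen_ideal_uminus[OF subring_UNIV])
qed

lemma elimination_ideal_subset_minors_ideal:
  fixes h :: "'k::idom mpoly"
  assumes "p \<ge> 1" "h \<in> ringS p" "h = (\<Sum>i\<in>{0..<p}. C i * fgen p i)"
  shows "h \<in> gen_ideal UNIV (minors3 p)"
proof -
  let ?V = "syz_vars p"
  obtain u where h: "h = (\<Sum>j\<in>?V. u j * cofactor p j)" and syz: "(\<Sum>j\<in>?V. u j * shear p j) = 0"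
    using elimination_syzygy[OF assms] by blast
  have "finite ?V"
    by (simp add: syz_vars_def)
  then obtain W where W: "\<And>j k. W j k = - W k j" "\<And>j. W j j = 0"
    "\<And>j. j \<in> ?V \<Longrightarrow> u j = (\<Sum>k\<in>?V. W j k * shear p k)"
    using koszul_syzygiesD[OF koszul_syzygies_shear syz] by blast
  have "h = (\<Sum>j\<in>?V. \<Sum>k\<in>?V. if j < k
      then W j k * (shear p k * cofactor p j - shear p j * cofactor p k) else 0)"
    unfolding h by (rule sum_alternating_combination[OF W])
  also have "\<dots> \<in> gen_ideal UNIV (minors3 p)"
    by (intro gen_ideal_sum subring_UNIV)
      (simp add: gen_ideal_0 gen_ideal_mult subring_UNIV shear_cofactor_in_minors_ideal)
  finally show ?thesis .
qed

lemma Mat_in_ringS: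
  assumes "j < 2 * p - 1"
  shows "Mat p r j \<in> ringS p"
proof -
  consider "j = 0" | i where "1 \<le> i" "i < p" "j = 2 * i - 1" | i where "1 \<le> i" "i < p" "j = 2 * i"
    using assms by (rule Mat_column_cases)
  then show ?thesis
  proof cases
    case 1
    then show ?thesis
      using assms unfolding ringS_def \<open>j = 0\<close> Mat_col_0 evar_def by auto
  next
    case (2 i)
    then show ?thesis
      unfolding ringS_def \<open>j = 2 * i - 1\<close> Mat_odd_col[OF \<open>1 \<le> i\<close>] by (simp add: evar_def)
  next
    case (3 i)
    then show ?thesis
      unfolding ringS_def by (simp add: Mat_even_col evar_def)
  qed
qed

lemma minors3_subset_ringS: "minors3 p \<subseteq> (ringS p :: 'k::comm_ring_1 mpoly set)"
proof
  fix x :: "'k mpoly"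
  assume "x \<in> minors3 p"
  then obtain a b c where x: "x = det3 (Mat p) a b c" and abc: "a < b" "b < c" "c < 2 * p - 1"
    unfolding minors3_def by blast
  have "(Mat p r j :: 'k mpoly) \<in> poly_ring_in {1..2*p}" if "j \<in> {a, b, c}" for r j
    using that abc Mat_in_ringS[of j p r] unfolding ringS_def by auto
  then show "x \<in> ringS p"
    unfolding x det3_def ringS_def by simp
qed

lemma subring_ringS: "subring (ringS p)" and subring_ringSt: "subring (ringSt p)"
  by (simp_all add: ringS_def ringSt_def subring_poly_ring_in)

lemma Mat_column_in_elimination_ideal:
  assumes "j < 2 * p - 1"
  shows "tvar * tvar * Mat p 0 j + tvar * Mat p 1 j + Mat p 2 j
    \<in> gen_ideal (ringSt p) (fgen p ` {0..<p})"
proof -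
  let ?I = "gen_ideal (ringSt p) (fgen p ` {0..<p})"
  have fgen: "fgen p i \<in> ?I" if "i < p" for i
    using that by (intro gen_ideal_generator subring_ringSt) auto
  consider "j = 0" | i where "1 \<le> i" "i < p" "j = 2 * i - 1" | i where "1 \<le> i" "i < p" "j = 2 * i"
    using assms by (rule Mat_column_cases)
  then show ?thesis
  proof cases
    case 1
    then show ?thesis
      using fgen[of 0] assms by (simp add: Mat_col_0 fgen_def power2_eq_square ac_simps)
  next
    case (2 i)
    then have "tvar * tvar * Mat p 0 j + tvar * Mat p 1 j + Mat p 2 j = tvar * fgen p i"
      unfolding \<open>j = 2 * i - 1\<close> Mat_odd_col[OF \<open>1 \<le> i\<close>] by (simp add: fgen_def algebra_simps)
    also have "\<dots> \<in> ?I"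
      using fgen[OF \<open>i < p\<close>] by (intro gen_ideal_mult subring_ringSt) (simp_all add: tvar_def ringSt_def)
    finally show ?thesis .
  next
    case (3 i)
    then have "tvar * tvar * Mat p 0 j + tvar * Mat p 1 j + Mat p 2 j = fgen p i"
      unfolding \<open>j = 2 * i\<close> Mat_even_col[OF \<open>1 \<le> i\<close>] by (simp add: fgen_def algebra_simps)
    then show ?thesis
      using fgen[OF \<open>i < p\<close>] by metis
  qed
qed

lemma minors3_subset_elimination_ideal:
  "minors3 p \<subseteq> (gen_ideal (ringSt p) (fgen p ` {0..<p}) :: 'k::comm_ring_1 mpoly set)"
proof
  fix x :: "'k mpoly"
  assume "x \<in> minors3 p"
  then obtain a b c where x: "x = det3 (Mat p) a b c" and abc: "a < b" "b < c" "c < 2 * p - 1"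
    unfolding minors3_def by blast
  have "(Mat p r j :: 'k mpoly) \<in> poly_ring_in {0..2*p}" if "j \<in> {a, b, c}" for r j
    using that abc Mat_in_ringS[of j p r] poly_ring_in_mono[of "{1..2*p}" "{0..2*p}"]
    unfolding ringS_def by auto
  then have coeff: "Mat p 0 j * Mat p 1 k - Mat p 0 k * Mat p 1 j \<in> (ringSt p :: 'k mpoly set)"
    if "j \<in> {a, b, c}" "k \<in> {a, b, c}" for j k
    using that unfolding ringSt_def by simp
  have col: "tvar * tvar * Mat p 0 j + tvar * Mat p 1 j + Mat p 2 j
      \<in> (gen_ideal (ringSt p) (fgen p ` {0..<p}) :: 'k mpoly set)"
    if "j \<in> {a, b, c}" for j
    using that abc by (intro Mat_column_in_elimination_ideal) auto
  show "x \<in> gen_ideal (ringSt p) (fgen p ` {0..<p})"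
    unfolding x det3_eq_column_combination[where T = tvar]
    by (intro gen_ideal_add gen_ideal_diff gen_ideal_mult subring_ringSt coeff col) auto
qed

theorem corollary6p9:
  fixes p :: nat
  assumes "p \<ge> 3"
  shows "gen_ideal (ringSt p) (fgen p ` {0..<p}) \<inter> ringS p
         = gen_ideal (ringS p) (minors3 p :: 'k::field mpoly set)"
proof
  show "gen_ideal (ringSt p) (fgen p ` {0..<p}) \<inter> ringS p
      \<subseteq> gen_ideal (ringS p) (minors3 p :: 'k mpoly set)"
  proof
    fix h :: "'k mpoly"
    assume h: "h \<in> gen_ideal (ringSt p) (fgen p ` {0..<p}) \<inter> ringS p"
    then obtain C where "h = (\<Sum>i\<in>{0..<p}. C i * fgen p i)"
      using gen_ideal_image[OF finite_atLeastLessThan] by blast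
    with h assms have "h \<in> gen_ideal UNIV (minors3 p)"
      by (intro elimination_ideal_subset_minors_ideal) auto
    with h show "h \<in> gen_ideal (ringS p) (minors3 p)"
      using gen_ideal_UNIV_inter_poly_ring_in[OF minors3_subset_ringS[unfolded ringS_def]]
      unfolding ringS_def by blast
  qed
  have "ringS p \<subseteq> (ringSt p :: 'k mpoly set)"
    unfolding ringS_def ringSt_def by (rule poly_ring_in_mono) auto
  then show "gen_ideal (ringS p) (minors3 p :: 'k mpoly set)
      \<subseteq> gen_ideal (ringSt p) (fgen p ` {0..<p}) \<inter> ringS p"
    using gen_ideal_subset_gen_ideal[OF subring_ringSt _ minors3_subset_elimination_ideal]
      gen_ideal_subset_subring[OF subring_ringS minors3_subset_ringS]
    by blast
qed

end
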